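(* Let $a>0$ and $b>0$, and let the two summands below be independent. Then $$\mathbf{B}'_{a,b}+\mathbf{B}'_{a,b}\;\succ_{st}\;\mathbf{B}'_{2a,b}\quad\Longleftrightarrow\quad b\le 1.$$
   Context: For $p,q>0$, $\mathbf{B}'_{p,q}$ denotes a beta prime random variable with density $\frac{\Gamma(p+q)}{\Gamma(p)\Gamma(q)}\frac{x^{p-1}}{(1+x)^{p+q}}$ on $(0,\infty)$. For positive random variables $X,Y$, $X\succ_{st}Y$ means $\mathbb{P}[X\le x]\le\mathbb{P}[Y\le x]$ for all $x\ge0$. *)

theory Defs
  imports "HOL-Probability.Probability"
begin

definition betaprime_density :: "real \<Rightarrow> real \<Rightarrow> real \<Rightarrow> real" where
  "betaprime_density p q x =
     (if 0 < x then Gamma (p + q) / (Gamma p * Gamma q) * x powr (p - 1) / (1 + x) powr (p + q)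
      else 0)"

definition betaprime :: "real \<Rightarrow> real \<Rightarrow> real measure" where
  "betaprime p q = density lborel (\<lambda>x. ennreal (betaprime_density p q x))"

definition stoch_dom :: "real measure \<Rightarrow> real measure \<Rightarrow> bool" where
  "stoch_dom M N \<longleftrightarrow> (\<forall>x\<ge>0. measure M {..x} \<le> measure N {..x})"

end

theory Submission
  imports Defs "HOL-Real_Asymp.Real_Asymp"
begin

text \<open>
  Let \<open>X, Y\<close> be independent with law \<open>B'(a,b)\<close> and distribution function \<open>F\<close>, and let \<open>Z\<close>
  have law \<open>B'(2a,b)\<close> and distribution function \<open>G\<close>.

  For \<open>b \<le> 1\<close>: since \<open>X, Y > 0\<close>, \<open>P[X + Y \<le> x] \<le> F(x)\<^sup>2\<close>, and \<open>F\<^sup>2 \<le> G\<close>. Indeed the density of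
  \<open>Z\<close> is the density \<open>f\<close> of \<open>X\<close> times \<open>2c (x/(1+x))\<^sup>a\<close> with \<open>c = B(a,b) / (2 B(2a,b))\<close>, so
  \<open>(G - F\<^sup>2)' = 2 f \<psi>\<close> with \<open>\<psi> = c (x/(1+x))\<^sup>a - F\<close>. Now \<open>\<psi>(0) = 0\<close> and \<open>\<psi>'\<close> is a positive
  function times \<open>c a - (1+x)\<^bsup>1-b\<^esup> / B(a,b)\<close>, which is nonincreasing for \<open>b \<le> 1\<close>; so \<open>\<psi>\<close>
  changes sign at most once, from \<open>+\<close> to \<open>-\<close>. Thus \<open>G - F\<^sup>2\<close> first increases and then
  decreases, and it vanishes at \<open>0\<close> and at \<open>\<infinity>\<close>.

  For \<open>b > 1\<close> we compare tails. From \<open>P[X > y] \<le> y\<^bsup>-b\<^esup> / (b B(a,b))\<close> and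
  \<open>P[X + Y > x] \<le> 2 P[X > e x] + P[X > (1-e) x]\<^sup>2\<close> we get
  \<open>P[X + Y > x] \<le> (2 e\<^bsup>-b\<^esup> / (b B(a,b)) + o(1)) x\<^bsup>-b\<^esup>\<close>, while
  \<open>P[Z > x] \<ge> x\<^bsup>2a\<^esup> (1+x)\<^bsup>-2a-b\<^esup> / (b B(2a,b)) = (1 / (b B(2a,b)) + o(1)) x\<^bsup>-b\<^esup>\<close>.
  Monotonicity of the Digamma function gives \<open>2 B(2a,b) < B(a,b)\<close> for \<open>b > 1\<close>, so for \<open>e\<close>
  close to \<open>1\<close> and \<open>x\<close> large the tail of \<open>X + Y\<close> is the smaller one.
\<close>

section \<open>Convolution of laws on the real line\<close>

lemma (in pair_prob_space) measure_pair_measure_Times: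
  assumes "A \<in> sets M1" "B \<in> sets M2"
  shows "measure (M1 \<Otimes>\<^sub>M M2) (A \<times> B) = measure M1 A * measure M2 B"
  using assms by (simp add: measure_def M2.emeasure_pair_measure_Times enn2real_mult)

lemma pair_prob_space_real_distribution:
  "real_distribution M \<Longrightarrow> real_distribution N \<Longrightarrow> pair_prob_space M N"
  by (simp add: real_distribution_def pair_prob_space_def pair_sigma_finite_def
      prob_space_imp_sigma_finite)

lemma real_distribution_convolution:
  assumes "real_distribution M" "real_distribution N"
  shows "real_distribution (M \<star> N)"
proof -
  interpret pair_prob_space M N
    using assms by (rule pair_prob_space_real_distribution)
  have [measurable_cong]: "sets M = sets borel" "sets N = sets borel"
    using assms by (simp_all add: real_distribution.events_eq_borel)
  have "prob_space (M \<star> N)"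
    unfolding convolution_def by (rule prob_space_distr) measurable
  then show ?thesis by (simp add: real_distribution_def real_distribution_axioms_def)
qed

lemma measure_convolution:
  assumes "real_distribution M" "real_distribution N" "A \<in> sets borel"
  shows "measure (M \<star> N) A = measure (M \<Otimes>\<^sub>M N) {p. fst p + snd p \<in> A}"
proof -
  interpret M: real_distribution M by fact
  interpret N: real_distribution N by fact
  have "(\<lambda>(x, y). x + y) -` A \<inter> space (M \<Otimes>\<^sub>M N) = {p. fst p + snd p \<in> A}"
    by (auto simp: space_pair_measure)
  then show ?thesis
    using assms unfolding convolution_def by (subst measure_distr) auto
qed

lemma (in real_distribution) prob_greaterThan: "prob {x<..} = 1 - cdf M x"
proof -
  have "space M - {..x} = {x<..}" by auto
  then show ?thesis using prob_compl[of "{..x}"] by (simp add: cdf_def)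
qed

lemma measure_convolution_atMost_le:
  fixes M N :: "real measure"
  assumes "real_distribution M" "real_distribution N"
    and "measure M {..<0} = 0" "measure N {..<0} = 0"
  shows "measure (M \<star> N) {..x} \<le> measure M {..x} * measure N {..x}"
proof -
  interpret M: real_distribution M by fact
  interpret N: real_distribution N by fact
  interpret pair_prob_space M N
    using assms by (intro pair_prob_space_real_distribution)
  have "measure (M \<star> N) {..x} = measure (M \<Otimes>\<^sub>M N) {p. fst p + snd p \<le> x}"
    using assms by (simp add: measure_convolution)
  also have "\<dots> \<le> measure (M \<Otimes>\<^sub>M N) ({..x} \<times> {..x} \<union> {..<0} \<times> UNIV \<union> UNIV \<times> {..<0})"
    by (rule finite_measure_mono) auto
  also have "\<dots> \<le> measure M {..x} * measure N {..x} + measure M {..<0} * measure N UNIV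
      + measure M UNIV * measure N {..<0}"
    by (intro order.trans[OF measure_Un_le] add_mono) (auto simp: measure_pair_measure_Times)
  finally show ?thesis using assms by simp
qed

lemma measure_convolution_greaterThan_le:
  fixes M N :: "real measure"
  assumes "real_distribution M" "real_distribution N"
  shows "measure (M \<star> N) {x<..}
    \<le> measure M {x - t<..} + measure N {x - t<..} + measure M {t<..} * measure N {t<..}"
proof -
  interpret M: real_distribution M by fact
  interpret N: real_distribution N by fact
  interpret pair_prob_space M N
    using assms by (intro pair_prob_space_real_distribution)
  have "measure (M \<star> N) {x<..} = measure (M \<Otimes>\<^sub>M N) {p. x < fst p + snd p}"
    using assms by (simp add: measure_convolution)
  also have "\<dots> \<le> measure (M \<Otimes>\<^sub>M N) ({x - t<..} \<times> UNIV \<union> UNIV \<times> {x - t<..} \<union> {t<..} \<times> {t<..})"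
    by (rule finite_measure_mono) auto
  also have "\<dots> \<le> measure M {x - t<..} * measure N UNIV + measure M UNIV * measure N {x - t<..}
      + measure M {t<..} * measure N {t<..}"
    by (intro order.trans[OF measure_Un_le] add_mono) (auto simp: measure_pair_measure_Times)
  finally show ?thesis
    using M.prob_space N.prob_space by simp
qed

section \<open>Sign arguments for real functions\<close>

lemma DERIV_nonpos_tendsto_0_imp_nonneg:
  fixes G G' :: "real \<Rightarrow> real"
  assumes deriv: "\<And>z. y \<le> z \<Longrightarrow> (G has_real_derivative G' z) (at z)"
    and nonpos: "\<And>z. y < z \<Longrightarrow> G' z \<le> 0"
    and lim: "(G \<longlongrightarrow> 0) at_top"
  shows "0 \<le> G y"
proof (rule tendsto_upperbound[OF lim])
  have decreasing: "G z \<le> G y" if "y \<le> z" for z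
  proof (rule DERIV_nonpos_imp_decreasing_open[OF that])
    show "continuous_on {y..z} G"
      using deriv by (intro continuous_at_imp_continuous_on ballI DERIV_isCont) auto
    show "\<exists>d. (G has_real_derivative d) (at w) \<and> d \<le> 0" if "y < w" "w < z" for w
      using deriv[of w] nonpos[of w] that by auto
  qed
  show "\<forall>\<^sub>F z in at_top. G z \<le> G y"
    using eventually_ge_at_top[of y] by eventually_elim (rule decreasing)
qed simp

lemma nonpos_after_neg_if_deriv_antitone_factor:
  fixes \<psi> h g :: "real \<Rightarrow> real"
  assumes cont: "continuous_on {0..} \<psi>" and "\<psi> 0 = 0"
    and deriv: "\<And>x. 0 < x \<Longrightarrow> (\<psi> has_real_derivative h x * g x) (at x)"
    and h_pos: "\<And>x. 0 < x \<Longrightarrow> 0 < h x"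
    and g_antitone: "\<And>x y. 0 < x \<Longrightarrow> x \<le> y \<Longrightarrow> g y \<le> g x"
    and "0 < u" "u \<le> v" "\<psi> u < 0"
  shows "\<psi> v \<le> 0"
proof (rule ccontr)
  txt \<open>By the mean value theorem, \<open>\<psi> u < \<psi> 0\<close> yields a point left of \<open>u\<close> where \<open>g < 0\<close>,
    and \<open>\<psi> u < \<psi> v\<close> a point right of \<open>u\<close> where \<open>g > 0\<close>, contradicting antitonicity.\<close>
  assume "\<not> \<psi> v \<le> 0"
  with assms have "u < v" by (cases "u = v") auto
  have slope: "\<exists>z. s < z \<and> z < t \<and> \<psi> t - \<psi> s = (t - s) * (h z * g z)" if "0 \<le> s" "s < t" for s t
  proof -
    have "continuous_on {s..t} \<psi>" by (rule continuous_on_subset[OF cont]) (use that in auto)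
    moreover have "\<psi> differentiable (at x)" if "s < x" "x < t" for x
      using deriv[of x] \<open>0 \<le> s\<close> that real_differentiable_def by auto
    ultimately obtain l z where "s < z" "z < t" "(\<psi> has_real_derivative l) (at z)"
      and "\<psi> t - \<psi> s = (t - s) * l"
      using MVT[OF \<open>s < t\<close>] by blast
    moreover from this have "l = h z * g z"
      using DERIV_unique deriv[of z] \<open>0 \<le> s\<close> by auto
    ultimately show ?thesis by auto
  qed
  obtain z where z: "0 < z" "z < u" "\<psi> u - \<psi> 0 = u * (h z * g z)"
    using slope[of 0 u] \<open>0 < u\<close> by auto
  obtain w where w: "u < w" "w < v" "\<psi> v - \<psi> u = (v - u) * (h w * g w)"
    using slope[of u v] \<open>0 < u\<close> \<open>u < v\<close> by auto
  have "u * (h z * g z) < 0"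
    using z \<open>\<psi> 0 = 0\<close> \<open>\<psi> u < 0\<close> by simp
  then have "g z < 0"
    using \<open>0 < u\<close> h_pos[of z] z by (simp add: mult_less_0_iff)
  have "0 < (v - u) * (h w * g w)"
    using w \<open>\<not> \<psi> v \<le> 0\<close> \<open>\<psi> u < 0\<close> by linarith
  then have "0 < g w"
    using \<open>u < v\<close> h_pos[of w] w z by (simp add: zero_less_mult_iff)
  moreover have "g w \<le> g z" using g_antitone z w by simp
  ultimately show False using \<open>g z < 0\<close> by simp
qed

lemma nonneg_if_deriv_sign_change_once:
  fixes \<phi> \<psi> k :: "real \<Rightarrow> real"
  assumes cont: "continuous_on {0..} \<phi>" and "\<phi> 0 = 0" and lim: "(\<phi> \<longlongrightarrow> 0) at_top"
    and deriv: "\<And>x. 0 < x \<Longrightarrow> (\<phi> has_real_derivative k x * \<psi> x) (at x)"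
    and k_pos: "\<And>x. 0 < x \<Longrightarrow> 0 < k x"
    and sign_change: "\<And>u v. 0 < u \<Longrightarrow> u \<le> v \<Longrightarrow> \<psi> u < 0 \<Longrightarrow> \<psi> v \<le> 0"
    and "0 \<le> x"
  shows "0 \<le> \<phi> x"
proof (cases "\<forall>z. 0 < z \<and> z < x \<longrightarrow> 0 \<le> \<psi> z")
  case True
  have "\<phi> 0 \<le> \<phi> x"
  proof (rule DERIV_nonneg_imp_increasing_open[OF \<open>0 \<le> x\<close> _ continuous_on_subset[OF cont]])
    show "\<exists>y. (\<phi> has_real_derivative y) (at z) \<and> 0 \<le> y" if "0 < z" "z < x" for z
      using deriv[of z] k_pos[of z] True that by force
  qed auto
  then show ?thesis using \<open>\<phi> 0 = 0\<close> by simp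
next
  case False
  then obtain z where "0 < z" "z < x" "\<psi> z < 0" by force
  show ?thesis
  proof (rule DERIV_nonpos_tendsto_0_imp_nonneg[OF deriv _ lim])
    show "k w * \<psi> w \<le> 0" if "x < w" for w
      using sign_change[of z w] k_pos[of w] \<open>0 < z\<close> \<open>z < x\<close> \<open>\<psi> z < 0\<close> that
      by (simp add: mult_nonneg_nonpos)
  qed (use \<open>0 < z\<close> \<open>z < x\<close> in auto)
qed

section \<open>The Beta function\<close>

lemma Beta_real_pos: "0 < a \<Longrightarrow> 0 < b \<Longrightarrow> 0 < Beta a (b :: real)"
  by (simp add: Beta_def)

lemma Gamma_shift_ratio_strict_mono:
  fixes b p q :: real
  assumes "1 < b" "0 < p" "p < q"
  shows "Gamma (p + b) / Gamma (p + 1) < Gamma (q + b) / Gamma (q + 1)"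
proof (rule DERIV_pos_imp_increasing[OF \<open>p < q\<close>])
  fix s assume "p \<le> s" "s \<le> q"
  then have "0 < s" using assms by simp
  then have "s + b \<notin> \<int>\<^sub>\<le>\<^sub>0" "s + 1 \<notin> \<int>\<^sub>\<le>\<^sub>0"
    using assms by (auto elim!: nonpos_Ints_cases)
  then have "((\<lambda>s. Gamma (s + b) / Gamma (s + 1)) has_real_derivative
      Gamma (s + b) / Gamma (s + 1) * (Digamma (s + b) - Digamma (s + 1))) (at s)"
  proof -
    have "0 < Gamma (s + 1)" using \<open>0 < s\<close> by (intro Gamma_real_pos) simp
    then show ?thesis
      using \<open>s + b \<notin> \<int>\<^sub>\<le>\<^sub>0\<close> \<open>s + 1 \<notin> \<int>\<^sub>\<le>\<^sub>0\<close>
      by (auto intro!: derivative_eq_intros simp: field_simps power2_eq_square)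
  qed
  moreover have "0 < Gamma (s + b) / Gamma (s + 1) * (Digamma (s + b) - Digamma (s + 1))"
    using \<open>0 < s\<close> assms Digamma_real_strict_mono[of "s + 1" "s + b"] by simp
  ultimately show "\<exists>d. ((\<lambda>s. Gamma (s + b) / Gamma (s + 1)) has_real_derivative d) (at s) \<and> 0 < d"
    by blast
qed

lemma Beta_double_lt:
  fixes a b :: real
  assumes "0 < a" "1 < b"
  shows "2 * Beta (2 * a) b < Beta a b"
proof -
  define R where "R p = Gamma (p + b) / Gamma (p + 1)" for p
  have Beta_eq: "Beta p b = Gamma b / (p * R p)" if "0 < p" for p
  proof -
    have "p \<notin> \<int>\<^sub>\<le>\<^sub>0" using that by (auto elim!: nonpos_Ints_cases)
    then show ?thesis
      using that assms Gamma_plus1[of p] Gamma_real_pos[of p] Gamma_real_pos[of "p + b"]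
      by (simp add: Beta_def R_def field_simps)
  qed
  have "0 < R a" using assms by (simp add: R_def)
  moreover have "R a < R (2 * a)"
    unfolding R_def using assms by (intro Gamma_shift_ratio_strict_mono) auto
  ultimately have "Gamma b / (a * R (2 * a)) < Gamma b / (a * R a)"
    using assms by (intro divide_strict_left_mono) auto
  then show ?thesis
    using assms by (simp add: Beta_eq)
qed

section \<open>Laws with a density\<close>

lemma measure_density_lborel:
  fixes f :: "real \<Rightarrow> real"
  assumes "f \<in> borel_measurable borel" "\<And>x. 0 \<le> f x" "A \<in> sets borel"
  shows "measure (density lborel (\<lambda>x. ennreal (f x))) A = (LINT x:A|lborel. f x)"
  using assms
  by (auto simp: measure_def emeasure_density set_lebesgue_integral_def integral_eq_nn_integral
      intro!: arg_cong[where f=enn2real] nn_integral_cong split: split_indicator)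

lemma cdf_density_has_real_derivative:
  fixes f :: "real \<Rightarrow> real"
  defines "M \<equiv> density lborel (\<lambda>x. ennreal (f x))"
  assumes M: "real_distribution M" and [measurable]: "f \<in> borel_measurable borel"
    and nonneg: "\<And>x. 0 \<le> f x" and "open S" "continuous_on S f" "x \<in> S"
  shows "(cdf M has_real_derivative f x) (at x)"
proof -
  interpret real_distribution M by (fact M)
  obtain e where "0 < e" and "{x - e..x + e} \<subseteq> S"
    using \<open>open S\<close> \<open>x \<in> S\<close> by (force simp: open_contains_cball cball_eq_atLeastAtMost)
  have cdf_eq: "cdf M z = cdf M (x - e) + (LBINT t=x - e..z. f t)" if "x - e < z" for z
  proof -
    have "cdf M z - cdf M (x - e) = measure M {x - e<..z}"
      using that by (rule cdf_diff_eq)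
    also have "\<dots> = (LBINT t=x - e..z. f t)"
      using that nonneg by (simp add: M_def measure_density_lborel interval_integral_Ioc)
    finally show ?thesis by simp
  qed
  have "((\<lambda>z. LBINT t=x - e..z. f t) has_vector_derivative f x) (at x within {x - e..x + e})"
    using \<open>0 < e\<close> \<open>{x - e..x + e} \<subseteq> S\<close> \<open>continuous_on S f\<close>
    by (intro interval_integral_FTC2) (auto intro: continuous_on_subset)
  moreover have "at x within {x - e..x + e} = at x"
    using \<open>0 < e\<close> by (intro at_within_interior) auto
  ultimately have "((\<lambda>z. LBINT t=x - e..z. f t) has_real_derivative f x) (at x)"
    by (simp add: has_real_derivative_iff_has_vector_derivative)
  then have "((\<lambda>z. cdf M (x - e) + (LBINT t=x - e..z. f t)) has_real_derivative f x) (at x)"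
    using DERIV_add[OF DERIV_const] by fastforce
  then show ?thesis
    by (rule has_field_derivative_transform_within_open[where S="{x - e<..}"])
      (use \<open>0 < e\<close> cdf_eq in auto)
qed

section \<open>The beta prime law\<close>

lemma betaprime_kernel_substitution:
  fixes p q t :: real
  assumes "0 < t" "t < 1"
  shows "(t / (1 - t)) powr (p - 1) / (1 + t / (1 - t)) powr (p + q) * (1 / (1 - t)\<^sup>2)
    = t powr (p - 1) * (1 - t) powr (q - 1)"
proof -
  define u where "u = 1 - t"
  have "0 < u" using assms by (simp add: u_def)
  have "1 + t / u = 1 / u" using \<open>0 < u\<close> by (simp add: u_def field_simps)
  then have "(1 + t / u) powr (p + q) = 1 / u powr (p + q)"
    using \<open>0 < u\<close> by (simp add: powr_divide)
  moreover have "(t / u) powr (p - 1) = t powr (p - 1) / u powr (p - 1)"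
    using assms \<open>0 < u\<close> by (simp add: powr_divide)
  moreover have "u powr (p + q) = u powr (p - 1) * u powr (q - 1) * u\<^sup>2"
    using \<open>0 < u\<close> powr_add[of u "p - 1" "q - 1"] powr_add[of u "p - 1 + (q - 1)" 2]
    by (simp add: powr_numeral)
  ultimately show ?thesis
    using \<open>0 < u\<close> by (simp add: u_def[symmetric])
qed

lemma interval_integral_Beta:
  fixes p q :: real
  assumes "0 < p" "0 < q"
  shows "set_integrable lborel (einterval 0 1) (\<lambda>t. t powr (p - 1) * (1 - t) powr (q - 1))"
    and "(LBINT t=0..1. t powr (p - 1) * (1 - t) powr (q - 1)) = Beta p q"
proof -
  have "einterval 0 1 = {0<..<1::real}" by (auto simp: einterval_def)
  moreover have "((\<lambda>t. t powr (p - 1) * (1 - t) powr (q - 1)) has_integral Beta p q) {0<..<1}"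
    using has_integral_Beta_real[OF assms] by (simp add: has_integral_Icc_iff_Ioo)
  moreover have "set_integrable lborel {0<..<1} (\<lambda>t. t powr (p - 1) * (1 - t) powr (q - 1))"
    by (rule set_integrable_subset[OF integrable_Beta[OF assms]]) auto
  ultimately show "set_integrable lborel (einterval 0 1) (\<lambda>t. t powr (p - 1) * (1 - t) powr (q - 1))"
    and "(LBINT t=0..1. t powr (p - 1) * (1 - t) powr (q - 1)) = Beta p q"
    by (simp_all add: interval_lebesgue_integral_def set_borel_integral_eq_integral integral_unique)
qed

lemma has_integral_betaprime_kernel:
  fixes p q :: real
  assumes "0 < p" "0 < q"
  shows "((\<lambda>x. x powr (p - 1) / (1 + x) powr (p + q)) has_integral Beta p q) {0<..}"
proof -
  define f where "f x = x powr (p - 1) / (1 + x) powr (p + q)" for x :: real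
  define g where "g t = t / (1 - t)" for t :: real
  define g' where "g' t = 1 / (1 - t)\<^sup>2" for t :: real
  have [simp]: "ereal t < 1 \<longleftrightarrow> t < 1" "0 < ereal t \<longleftrightarrow> 0 < t" for t
    by (simp_all add: one_ereal_def zero_ereal_def)
  have fg: "f (g t) * g' t = t powr (p - 1) * (1 - t) powr (q - 1)" if "t \<in> einterval 0 1" for t
    using that betaprime_kernel_substitution[of t p q]
    by (simp add: f_def g_def g'_def einterval_def)
  have "set_integrable lborel (einterval 0 1) (\<lambda>t. f (g t) * g' t)"
    using interval_integral_Beta(1)[OF assms] by (subst set_integrable_cong[OF refl refl fg]) auto
  moreover have "DERIV g t :> g' t" if "0 < t" "t < 1" for t
    using that unfolding g_def g'_def
    by (auto intro!: derivative_eq_intros simp: field_simps power2_eq_square)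
  moreover have "isCont f (g t)" "isCont g' t" "0 \<le> f (g t)" if "0 < t" "t < 1" for t
  proof -
    have "0 < g t" using that by (simp add: g_def)
    then show "isCont f (g t)" "isCont g' t" "0 \<le> f (g t)"
      using that unfolding f_def g'_def by (auto intro!: continuous_intros)
  qed
  moreover have "((ereal \<circ> g \<circ> real_of_ereal) \<longlongrightarrow> 0) (at_right 0)"
    unfolding g_def by (auto simp: zero_ereal_def ereal_tendsto_simps intro!: tendsto_eq_intros)
  moreover have "filterlim g at_top (at_left 1)"
    unfolding g_def by real_asymp
  then have "((ereal \<circ> g \<circ> real_of_ereal) \<longlongrightarrow> \<infinity>) (at_left 1)"
    by (auto simp: one_ereal_def ereal_tendsto_simps)
  ultimately have "set_integrable lborel (einterval 0 \<infinity>) f"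
    and "(LBINT x=0..\<infinity>. f x) = (LBINT t=0..1. f (g t) * g' t)"
    by (intro interval_integral_substitution_nonneg[of 0 1 g g' f]; simp add: g'_def)+
  moreover have "(LBINT t=0..1. f (g t) * g' t) = Beta p q"
    using interval_integral_Beta(2)[OF assms] by (subst interval_integral_cong[OF fg]) auto
  moreover have "einterval 0 \<infinity> = ({0<..} :: real set)" by (auto simp: einterval_def)
  ultimately have "set_integrable lborel {0<..} f" and "(LINT x:{0<..}|lborel. f x) = Beta p q"
    by (simp_all add: interval_lebesgue_integral_0_infty)
  then have "(f has_integral Beta p q) {0<..}"
    by (simp add: has_integral_iff set_borel_integral_eq_integral)
  then show ?thesis by (simp add: f_def[abs_def])
qed

lemma betaprime_density_pos:
  "0 < x \<Longrightarrow> betaprime_density p q x = x powr (p - 1) / (1 + x) powr (p + q) / Beta p q"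
  by (simp add: betaprime_density_def Beta_def mult_ac)

lemma betaprime_density_nonpos: "x \<le> 0 \<Longrightarrow> betaprime_density p q x = 0"
  by (simp add: betaprime_density_def)

lemma betaprime_density_nonneg: "0 < p \<Longrightarrow> 0 < q \<Longrightarrow> 0 \<le> betaprime_density p q x"
  by (simp add: betaprime_density_def)

lemma borel_measurable_betaprime_density [measurable]:
  "betaprime_density p q \<in> borel_measurable borel"
  unfolding betaprime_density_def by measurable

lemma real_distribution_betaprime:
  assumes "0 < p" "0 < q"
  shows "real_distribution (betaprime p q)"
proof -
  have "Beta p q > 0" using assms by (rule Beta_real_pos)
  define k where "k x = indicator {0<..} x * (x powr (p - 1) / (1 + x) powr (p + q))" for x :: real
  have density_eq: "betaprime_density p q x = k x * (1 / Beta p q)" for x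
    by (cases "0 < x") (simp_all add: k_def betaprime_density_pos betaprime_density_nonpos)
  have "emeasure (betaprime p q) UNIV = (\<integral>\<^sup>+x. ennreal (betaprime_density p q x) \<partial>lborel)"
    by (simp add: betaprime_def emeasure_density)
  also have "\<dots> = (\<integral>\<^sup>+x. ennreal (k x) * ennreal (1 / Beta p q) \<partial>lborel)"
    unfolding density_eq using \<open>Beta p q > 0\<close>
    by (simp add: ennreal_mult'' del: times_divide_eq_right)
  also have "\<dots> = (\<integral>\<^sup>+x. ennreal (k x) \<partial>lborel) * ennreal (1 / Beta p q)"
    by (rule nn_integral_multc) (simp add: k_def)
  also have "(\<integral>\<^sup>+x. ennreal (k x) \<partial>lborel) = ennreal (Beta p q)"
    unfolding k_def
    by (rule nn_integral_has_integral_lebesgue[OF _ has_integral_betaprime_kernel[OF assms]]) simp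
  finally have "emeasure (betaprime p q) UNIV = 1"
    using \<open>Beta p q > 0\<close> by (simp add: ennreal_mult''[symmetric])
  then show ?thesis
    by (auto intro!: prob_spaceI
        simp: real_distribution_def real_distribution_axioms_def betaprime_def)
qed

lemma measure_betaprime:
  "0 < p \<Longrightarrow> 0 < q \<Longrightarrow> A \<in> sets borel \<Longrightarrow>
    measure (betaprime p q) A = (LINT x:A|lborel. betaprime_density p q x)"
  unfolding betaprime_def by (rule measure_density_lborel) (auto simp: betaprime_density_nonneg)

lemma measure_betaprime_nonpos:
  assumes "0 < p" "0 < q" "A \<in> sets borel" "A \<subseteq> {..0}"
  shows "measure (betaprime p q) A = 0"
proof -
  have "(LINT x:A|lborel. betaprime_density p q x) = (LINT x:A|lborel. 0)"
    using assms by (intro set_lebesgue_integral_cong) (auto simp: betaprime_density_nonpos)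
  then show ?thesis using assms by (simp add: measure_betaprime)
qed

lemma cdf_betaprime_nonpos: "0 < p \<Longrightarrow> 0 < q \<Longrightarrow> x \<le> 0 \<Longrightarrow> cdf (betaprime p q) x = 0"
  unfolding cdf_def by (rule measure_betaprime_nonpos) auto

lemma isCont_cdf_betaprime:
  assumes "0 < p" "0 < q"
  shows "isCont (cdf (betaprime p q)) x"
proof -
  interpret real_distribution "betaprime p q"
    using assms by (rule real_distribution_betaprime)
  have "measure (betaprime p q) {x} = (LINT t:{x}|lborel. betaprime_density p q t)"
    using assms by (simp add: measure_betaprime)
  also have "\<dots> = 0"
    unfolding set_lebesgue_integral_def
    by (rule integral_eq_zero_AE) (use AE_lborel_singleton[of x] in \<open>auto elim: eventually_mono\<close>)
  finally show ?thesis by (simp add: isCont_cdf)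
qed

lemma cdf_betaprime_has_real_derivative:
  assumes "0 < p" "0 < q" "0 < x"
  shows "(cdf (betaprime p q) has_real_derivative betaprime_density p q x) (at x)"
  unfolding betaprime_def
proof (rule cdf_density_has_real_derivative)
  have "continuous_on {0<..} (\<lambda>x. x powr (p - 1) / (1 + x) powr (p + q) / Beta p q)"
    using assms Beta_real_pos[of p q] by (intro continuous_intros) auto
  then show "continuous_on {0<..} (betaprime_density p q)"
    by (rule continuous_on_cong[THEN iffD1, rotated 2]) (auto simp: betaprime_density_pos)
qed (use assms real_distribution_betaprime in \<open>auto simp: betaprime_def betaprime_density_nonneg\<close>)

lemma cdf_betaprime_tendsto_1: "0 < p \<Longrightarrow> 0 < q \<Longrightarrow> (cdf (betaprime p q) \<longlongrightarrow> 1) at_top"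
  by (rule real_distribution.cdf_lim_at_top_prob[OF real_distribution_betaprime])

lemma measure_betaprime_greaterThan_le:
  assumes "0 < p" "0 < q" "0 < y"
  shows "measure (betaprime p q) {y<..} \<le> y powr - q / (q * Beta p q)"
proof -
  define G where "G z = z powr - q / (q * Beta p q) - (1 - cdf (betaprime p q) z)" for z
  have "0 < Beta p q" using assms by (simp add: Beta_real_pos)
  have "0 \<le> G y"
  proof (rule DERIV_nonpos_tendsto_0_imp_nonneg
      [where G = G and y = y and G' = "\<lambda>z. betaprime_density p q z - z powr (- q - 1) / Beta p q"])
    fix z assume "y \<le> z"
    then show "(G has_real_derivative betaprime_density p q z - z powr (- q - 1) / Beta p q) (at z)"
      unfolding G_def using assms \<open>0 < Beta p q\<close>
      by (auto intro!: derivative_eq_intros cdf_betaprime_has_real_derivative simp: field_simps)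
  next
    fix z assume "y < z"
    then have "0 < z" using assms by simp
    have "z powr (p - 1) / (1 + z) powr (p + q) \<le> z powr (p - 1) / z powr (p + q)"
      using \<open>0 < z\<close> assms by (intro divide_left_mono powr_mono2 mult_pos_pos) auto
    also have "\<dots> = z powr (- q - 1)"
      unfolding powr_diff[symmetric] by (rule arg_cong[where f = "(powr) z"]) simp
    finally have "betaprime_density p q z \<le> z powr (- q - 1) / Beta p q"
      unfolding betaprime_density_pos[OF \<open>0 < z\<close>]
      by (rule divide_right_mono) (use \<open>0 < Beta p q\<close> in simp)
    then show "betaprime_density p q z - z powr (- q - 1) / Beta p q \<le> 0" by simp
  next
    have "(G \<longlongrightarrow> 0 / (q * Beta p q) - (1 - 1)) at_top"
      unfolding G_def using assms \<open>0 < Beta p q\<close>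
      by (intro tendsto_intros tendsto_neg_powr filterlim_ident cdf_betaprime_tendsto_1) auto
    then show "(G \<longlongrightarrow> 0) at_top" by simp
  qed
  then show ?thesis
    using assms
    by (simp add: G_def real_distribution.prob_greaterThan[OF real_distribution_betaprime])
qed

lemma has_real_derivative_betaprime_tail_minorant:
  assumes "0 < p" "0 < q" "0 < z"
  shows "((\<lambda>z. z powr p * (1 + z) powr (- p - q)) has_real_derivative
    (p + q) * z powr (p - 1) * (1 + z) powr (- p - q - 1) - q * Beta p q * betaprime_density p q z)
    (at z)"
proof -
  define P Q where "P = z powr (p - 1)" and "Q = (1 + z) powr (- p - q - 1)"
  have zP: "z powr p = z * P" and zQ: "(1 + z) powr (- p - q) = (1 + z) * Q"
    using assms powr_mult_base[of z "p - 1"] powr_mult_base[of "1 + z" "- p - q - 1"]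
    by (simp_all add: P_def Q_def)
  have "(1 + z) * Q = 1 / (1 + z) powr (p + q)"
    using zQ powr_minus_divide[of "1 + z" "p + q"] by simp
  then have "q * Beta p q * betaprime_density p q z = q * P * ((1 + z) * Q)"
    using assms Beta_real_pos[of p q] by (simp add: betaprime_density_pos P_def)
  moreover have "((\<lambda>z. z powr p * (1 + z) powr (- p - q)) has_real_derivative
      p * z powr (p - 1) * (1 + z) powr (- p - q)
      + z powr p * ((- p - q) * (1 + z) powr (- p - q - 1))) (at z)"
    using assms by (auto intro!: derivative_eq_intros)
  ultimately show ?thesis
    unfolding zP zQ P_def[symmetric] Q_def[symmetric] by (simp add: algebra_simps)
qed

lemma measure_betaprime_greaterThan_ge:
  assumes "0 < p" "0 < q" "0 < x"
  shows "x powr p * (1 + x) powr (- p - q) / (q * Beta p q) \<le> measure (betaprime p q) {x<..}"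
proof -
  define H where
    "H z = (1 - cdf (betaprime p q) z) - z powr p * (1 + z) powr (- p - q) / (q * Beta p q)" for z
  have "0 < Beta p q" using assms by (simp add: Beta_real_pos)
  have "0 \<le> H x"
  proof (rule DERIV_nonpos_tendsto_0_imp_nonneg[where G = H and y = x
      and G' = "\<lambda>z. - ((p + q) * z powr (p - 1) * (1 + z) powr (- p - q - 1) / (q * Beta p q))"])
    fix z assume "x \<le> z"
    then have "0 < z" using assms by simp
    have "(H has_real_derivative (0 - betaprime_density p q z)
        - ((p + q) * z powr (p - 1) * (1 + z) powr (- p - q - 1)
          - q * Beta p q * betaprime_density p q z) / (q * Beta p q)) (at z)"
      unfolding H_def using assms \<open>0 < z\<close>
      by (intro DERIV_diff DERIV_const DERIV_cdivide cdf_betaprime_has_real_derivative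
          has_real_derivative_betaprime_tail_minorant)
    then show "(H has_real_derivative
        - ((p + q) * z powr (p - 1) * (1 + z) powr (- p - q - 1) / (q * Beta p q))) (at z)"
      by (rule DERIV_cong) (use assms \<open>0 < Beta p q\<close> in \<open>simp add: field_simps\<close>)
  next
    have "((\<lambda>z. z powr p * (1 + z) powr (- p - q)) \<longlongrightarrow> 0) at_top"
      using assms by real_asymp
    then have "(H \<longlongrightarrow> (1 - 1) - 0 / (q * Beta p q)) at_top"
      unfolding H_def using assms \<open>0 < Beta p q\<close>
      by (intro tendsto_intros cdf_betaprime_tendsto_1) auto
    then show "(H \<longlongrightarrow> 0) at_top" by simp
  qed (use assms \<open>0 < Beta p q\<close> in simp)
  then show ?thesis
    using assms
    by (simp add: H_def real_distribution.prob_greaterThan[OF real_distribution_betaprime])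
qed

section \<open>Domination for b \<le> 1\<close>

lemma betaprime_density_double:
  assumes "0 < a" "0 < b" "0 < x"
  shows "betaprime_density (2 * a) b x
    = Beta a b / Beta (2 * a) b * betaprime_density a b x * (x powr a * (1 + x) powr - a)"
proof -
  have "x powr (2 * a - 1) = x powr (a - 1) * x powr a"
    "(1 + x) powr (2 * a + b) = (1 + x) powr (a + b) * (1 + x) powr a"
    by (simp_all add: powr_add[symmetric])
  then show ?thesis
    using assms Beta_real_pos[of a b]
    by (simp add: betaprime_density_pos powr_minus_divide field_simps)
qed

lemma has_real_derivative_betaprime_cdf_gap:
  assumes "0 < a" "0 < b" "0 < x"
  shows "((\<lambda>x. c * (x powr a * (1 + x) powr - a) - cdf (betaprime a b) x) has_real_derivative
    x powr (a - 1) * (1 + x) powr (- a - 1) * (c * a - (1 + x) powr (1 - b) / Beta a b)) (at x)"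
proof -
  define P Q where "P = x powr (a - 1)" and "Q = (1 + x) powr (- a - 1)"
  have "x powr a = x * P" "(1 + x) powr - a = (1 + x) * Q"
    using assms powr_mult_base[of x "a - 1"] powr_mult_base[of "1 + x" "- a - 1"]
    by (simp_all add: P_def Q_def)
  moreover have "betaprime_density a b x = P * Q * (1 + x) powr (1 - b) / Beta a b"
  proof -
    have "(1 + x) powr (a + b) * ((1 + x) powr (- a - 1) * (1 + x) powr (1 - b)) = 1"
      using assms by (simp add: powr_add[symmetric])
    then show ?thesis
      using assms Beta_real_pos[of a b] by (simp add: betaprime_density_pos P_def Q_def field_simps)
  qed
  moreover have "((\<lambda>x. c * (x powr a * (1 + x) powr - a) - cdf (betaprime a b) x) has_real_derivative
      c * (a * P * (1 + x) powr - a + x powr a * (- a * Q)) - betaprime_density a b x) (at x)"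
    unfolding P_def Q_def using assms
    by (auto intro!: derivative_eq_intros cdf_betaprime_has_real_derivative)
  ultimately show ?thesis
    by (simp add: P_def[symmetric] Q_def[symmetric] algebra_simps)
qed

lemma betaprime_cdf_gap_sign_change:
  assumes "0 < a" "0 < b" "b \<le> 1" "0 < u" "u \<le> v"
    and "c * (u powr a * (1 + u) powr - a) - cdf (betaprime a b) u < 0"
  shows "c * (v powr a * (1 + v) powr - a) - cdf (betaprime a b) v \<le> 0"
proof (rule nonpos_after_neg_if_deriv_antitone_factor[where
      \<psi> = "\<lambda>x. c * (x powr a * (1 + x) powr - a) - cdf (betaprime a b) x"
      and h = "\<lambda>x. x powr (a - 1) * (1 + x) powr (- a - 1)"
      and g = "\<lambda>x. c * a - (1 + x) powr (1 - b) / Beta a b"])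
  show "continuous_on {0..} (\<lambda>x. c * (x powr a * (1 + x) powr - a) - cdf (betaprime a b) x)"
    using assms
    by (intro continuous_intros continuous_on_powr' continuous_at_imp_continuous_on ballI
        isCont_cdf_betaprime) (auto intro: continuous_intros)
  show "c * a - (1 + y) powr (1 - b) / Beta a b \<le> c * a - (1 + x) powr (1 - b) / Beta a b"
    if "0 < x" "x \<le> y" for x y
    using that assms Beta_real_pos[of a b] by (auto intro!: divide_right_mono powr_mono2)
qed (use assms in \<open>auto simp: cdf_betaprime_nonpos has_real_derivative_betaprime_cdf_gap\<close>)

lemma cdf_betaprime_sq_le:
  assumes "0 < a" "0 < b" "b \<le> 1" "0 \<le> x"
  shows "cdf (betaprime a b) x ^ 2 \<le> cdf (betaprime (2 * a) b) x"
proof -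
  define F1 F2 where "F1 = cdf (betaprime a b)" and "F2 = cdf (betaprime (2 * a) b)"
  define \<psi> where
    "\<psi> x = Beta a b / (2 * Beta (2 * a) b) * (x powr a * (1 + x) powr - a) - F1 x" for x
  have "0 \<le> F2 x - F1 x ^ 2"
  proof (rule nonneg_if_deriv_sign_change_once[where \<phi> = "\<lambda>x. F2 x - F1 x ^ 2" and \<psi> = \<psi>])
    show "continuous_on {0..} (\<lambda>x. F2 x - F1 x ^ 2)"
      unfolding F1_def F2_def using assms
      by (intro continuous_intros continuous_at_imp_continuous_on ballI isCont_cdf_betaprime) auto
    have "((\<lambda>x. F2 x - F1 x ^ 2) \<longlongrightarrow> 1 - 1 ^ 2) at_top"
      unfolding F1_def F2_def using assms by (intro tendsto_intros cdf_betaprime_tendsto_1) auto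
    then show "((\<lambda>x. F2 x - F1 x ^ 2) \<longlongrightarrow> 0) at_top" by simp
    show "((\<lambda>x. F2 x - F1 x ^ 2) has_real_derivative 2 * betaprime_density a b x * \<psi> x) (at x)"
      if "0 < x" for x
    proof -
      have "((\<lambda>x. F2 x - F1 x ^ 2) has_real_derivative
          betaprime_density (2 * a) b x - 2 * F1 x * betaprime_density a b x) (at x)"
        unfolding F1_def F2_def using assms that
        by (auto intro!: derivative_eq_intros cdf_betaprime_has_real_derivative)
      moreover have "betaprime_density (2 * a) b x - 2 * F1 x * betaprime_density a b x
          = 2 * betaprime_density a b x * \<psi> x"
        unfolding betaprime_density_double[OF assms(1,2) that] \<psi>_def
        using assms Beta_real_pos[of "2 * a" b] by (simp add: field_simps)
      ultimately show ?thesis by simp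
    qed
    show "0 < 2 * betaprime_density a b x" if "0 < x" for x
      using that assms Beta_real_pos[of a b] by (simp add: betaprime_density_pos)
    show "\<psi> v \<le> 0" if "0 < u" "u \<le> v" "\<psi> u < 0" for u v
      using betaprime_cdf_gap_sign_change[OF assms(1-3) that(1,2),
          where c = "Beta a b / (2 * Beta (2 * a) b)"] that(3)
      by (simp add: \<psi>_def F1_def)
  qed (use assms in \<open>simp_all add: F1_def F2_def cdf_betaprime_nonpos\<close>)
  then show ?thesis by (simp add: F1_def F2_def)
qed

lemma measure_betaprime_convolution_atMost_le:
  assumes "0 < a" "0 < b" "b \<le> 1" "0 \<le> x"
  shows "measure (betaprime a b \<star> betaprime a b) {..x} \<le> measure (betaprime (2 * a) b) {..x}"
proof -
  have "measure (betaprime a b) {..<0} = 0"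
    using assms by (intro measure_betaprime_nonpos) auto
  then have "measure (betaprime a b \<star> betaprime a b) {..x} \<le> cdf (betaprime a b) x ^ 2"
    using measure_convolution_atMost_le[of "betaprime a b" "betaprime a b"] assms
    by (simp add: real_distribution_betaprime cdf_def power2_eq_square)
  also have "\<dots> \<le> cdf (betaprime (2 * a) b) x"
    using assms by (rule cdf_betaprime_sq_le)
  finally show ?thesis by (simp add: cdf_def)
qed

section \<open>Failure of domination for b > 1\<close>

lemma measure_betaprime_convolution_greaterThan_le:
  assumes "0 < p" "0 < q" "0 < e" "e < 1" "0 < x"
  shows "measure (betaprime p q \<star> betaprime p q) {x<..}
    \<le> 2 * ((e * x) powr - q / (q * Beta p q)) + (((1 - e) * x) powr - q / (q * Beta p q))\<^sup>2"
proof -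
  let ?M = "betaprime p q"
  have "measure (?M \<star> ?M) {x<..} \<le> 2 * measure ?M {e * x<..} + (measure ?M {(1 - e) * x<..})\<^sup>2"
    using measure_convolution_greaterThan_le[of ?M ?M x "(1 - e) * x"] assms
    by (simp add: real_distribution_betaprime algebra_simps power2_eq_square)
  also have "\<dots>
      \<le> 2 * ((e * x) powr - q / (q * Beta p q)) + (((1 - e) * x) powr - q / (q * Beta p q))\<^sup>2"
    using assms by (intro add_mono mult_left_mono power_mono measure_betaprime_greaterThan_le) auto
  finally show ?thesis .
qed

lemma ex_powr_neg_lt:
  fixes b r :: real
  assumes "1 < r"
  shows "\<exists>e. 0 < e \<and> e < 1 \<and> e powr - b < r"
proof -
  have "((\<lambda>e. e powr - b) \<longlongrightarrow> 1) (at_left 1)"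
    by real_asymp
  then have "\<forall>\<^sub>F e in at_left 1. e powr - b < r"
    using assms by (rule order_tendstoD(2))
  moreover have "\<forall>\<^sub>F e in at_left (1::real). 0 < e \<and> e < 1"
    by (rule eventually_mono[OF eventually_at_left_real[of 0 1]]) auto
  ultimately have "\<forall>\<^sub>F e in at_left 1. e powr - b < r \<and> 0 < e \<and> e < 1"
    by (rule eventually_conj)
  then show ?thesis
    using eventually_happens'[OF trivial_limit_at_left_real] by blast
qed

lemma betaprime_tail_bounds_eventually_less:
  fixes a b e :: real
  assumes "0 < a" "0 < b" "0 < e" "e < 1"
    and e_small: "e powr - b < Beta a b / (2 * Beta (2 * a) b)"
  shows "\<forall>\<^sub>F x in at_top.
    2 * ((e * x) powr - b / (b * Beta a b)) + (((1 - e) * x) powr - b / (b * Beta a b))\<^sup>2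
      < x powr (2 * a) * (1 + x) powr (- (2 * a) - b) / (b * Beta (2 * a) b)"
proof -
  define B1 B2 where "B1 = Beta a b" and "B2 = Beta (2 * a) b"
  define U where "U x = 2 * ((e * x) powr - b / (b * B1)) + (((1 - e) * x) powr - b / (b * B1))\<^sup>2"
    for x
  define L where "L x = x powr (2 * a) * (1 + x) powr (- (2 * a) - b) / (b * B2)" for x
  have "0 < B1" "0 < B2" using assms by (simp_all add: B1_def B2_def Beta_real_pos)
  have "((\<lambda>x. x powr b * L x - x powr b * U x) \<longlongrightarrow> 1 / (b * B2) - 2 * e powr - b / (b * B1))
      at_top"
  proof (rule tendsto_diff)
    show "((\<lambda>x. x powr b * L x) \<longlongrightarrow> 1 / (b * B2)) at_top"
      unfolding L_def using assms(1-2) \<open>0 < B2\<close> by real_asymp (simp add: divide_inverse)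
    show "((\<lambda>x. x powr b * U x) \<longlongrightarrow> 2 * e powr - b / (b * B1)) at_top"
      unfolding U_def using assms(2-4) \<open>0 < B1\<close> by real_asymp (simp add: divide_inverse)
  qed
  moreover have "0 < 1 / (b * B2) - 2 * e powr - b / (b * B1)"
    using e_small \<open>0 < b\<close> \<open>0 < B1\<close> \<open>0 < B2\<close> by (simp add: B1_def B2_def field_simps)
  ultimately have "\<forall>\<^sub>F x in at_top. 0 < x powr b * L x - x powr b * U x"
    by (rule order_tendstoD(1))
  then have "\<forall>\<^sub>F x in at_top. U x < L x"
    using eventually_gt_at_top[of "0::real"]
    by eventually_elim (simp add: right_diff_distrib[symmetric] zero_less_mult_iff)
  then show ?thesis by (simp only: U_def L_def B1_def B2_def)
qed

lemma measure_betaprime_convolution_greaterThan_lt: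
  assumes "0 < a" "1 < b"
  shows "\<exists>x>0. measure (betaprime a b \<star> betaprime a b) {x<..}
    < measure (betaprime (2 * a) b) {x<..}"
proof -
  have "1 < Beta a b / (2 * Beta (2 * a) b)"
    using Beta_double_lt[OF assms] assms Beta_real_pos[of "2 * a" b] by (simp add: field_simps)
  then obtain e where e: "0 < e" "e < 1" "e powr - b < Beta a b / (2 * Beta (2 * a) b)"
    using ex_powr_neg_lt by blast
  have "\<forall>\<^sub>F x in at_top. 0 < x \<and>
    2 * ((e * x) powr - b / (b * Beta a b)) + (((1 - e) * x) powr - b / (b * Beta a b))\<^sup>2
      < x powr (2 * a) * (1 + x) powr (- (2 * a) - b) / (b * Beta (2 * a) b)"
    using assms e
    by (intro eventually_conj eventually_gt_at_top betaprime_tail_bounds_eventually_less) auto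
  then obtain x where "0 < x" and less:
    "2 * ((e * x) powr - b / (b * Beta a b)) + (((1 - e) * x) powr - b / (b * Beta a b))\<^sup>2
      < x powr (2 * a) * (1 + x) powr (- (2 * a) - b) / (b * Beta (2 * a) b)"
    using eventually_happens'[OF trivial_limit_at_top_linorder] by blast
  have "measure (betaprime a b \<star> betaprime a b) {x<..}
      \<le> 2 * ((e * x) powr - b / (b * Beta a b)) + (((1 - e) * x) powr - b / (b * Beta a b))\<^sup>2"
    using assms e \<open>0 < x\<close> by (intro measure_betaprime_convolution_greaterThan_le) auto
  also note less
  also have "x powr (2 * a) * (1 + x) powr (- (2 * a) - b) / (b * Beta (2 * a) b)
      \<le> measure (betaprime (2 * a) b) {x<..}"
    using assms \<open>0 < x\<close> by (intro measure_betaprime_greaterThan_ge) auto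
  finally show ?thesis using \<open>0 < x\<close> by blast
qed

lemma measure_betaprime_convolution_not_dominated:
  assumes "0 < a" "1 < b"
  shows "\<exists>x>0. measure (betaprime (2 * a) b) {..x} < measure (betaprime a b \<star> betaprime a b) {..x}"
proof -
  have "real_distribution (betaprime (2 * a) b)"
    and "real_distribution (betaprime a b \<star> betaprime a b)"
    using assms by (simp_all add: real_distribution_betaprime real_distribution_convolution)
  moreover obtain x where "0 < x"
    and "measure (betaprime a b \<star> betaprime a b) {x<..} < measure (betaprime (2 * a) b) {x<..}"
    using measure_betaprime_convolution_greaterThan_lt[OF assms] by blast
  ultimately show ?thesis
    by (intro exI[of _ x]) (simp add: real_distribution.prob_greaterThan cdf_def)
qed

theorem proposition7:
  fixes a b :: real
  assumes "0 < a" and "0 < b"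
  shows "stoch_dom (betaprime a b \<star> betaprime a b) (betaprime (2 * a) b) \<longleftrightarrow> b \<le> 1"
proof
  assume dom: "stoch_dom (betaprime a b \<star> betaprime a b) (betaprime (2 * a) b)"
  show "b \<le> 1"
  proof (rule ccontr)
    assume "\<not> b \<le> 1"
    then obtain x where "0 < x"
      and "measure (betaprime (2 * a) b) {..x} < measure (betaprime a b \<star> betaprime a b) {..x}"
      using measure_betaprime_convolution_not_dominated[OF \<open>0 < a\<close>] by (auto simp: not_le)
    moreover have
      "measure (betaprime a b \<star> betaprime a b) {..x} \<le> measure (betaprime (2 * a) b) {..x}"
      using dom \<open>0 < x\<close> by (simp add: stoch_dom_def)
    ultimately show False by simp
  qed
next
  assume "b \<le> 1"
  then show "stoch_dom (betaprime a b \<star> betaprime a b) (betaprime (2 * a) b)"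
    using assms by (simp add: stoch_dom_def measure_betaprime_convolution_atMost_le)
qed

end
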